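(* Let $d,\ell,m$ be positive integers with $m\ge\ell$. Let $H=(V,E)$ be an almost-acyclic $k$-uniform hypergraph with $m$ edges in which every edge is incident to at most $d$ other edges. Then $$\sum_{E'\subseteq E}|\mathcal B_\ell(E')|\le\Big(\frac{(15dN^k)^4m}{\ell}\Big)^{\ell/2}.$$
   Context: $N\ge2$, $\mathbb Z_N=\mathbb Z/N\mathbb Z$. A $k$-uniform hypergraph $(V,E)$ has finite vertex set $V$ and a set $E$ of edges, each an ordered $k$-tuple of distinct vertices; two edges are incident if they share a vertex. It is almost-acyclic if for every $\ell'\ge0$, any $\ell'$ distinct edges together cover at least $\ell'(k-1.1)$ vertices. For $y\in\mathbb Z_N^V$, $\|y\|_{\mathsf H}$ is the number of nonzero coordinates. For $E'\subseteq E$, $\mathcal B(E')$ is the set of maps $B:E'\to\mathbb Z_N^V$ such that for each $e=(v_1,\dots,v_k)\in E'$, $\mathrm{supp}(B(e))\subseteq\{v_1,\dots,v_k\}$ and $|\mathrm{supp}(B(e))|\ge3$; $\Sigma B=\sum_{e\in E'}B(e)$; and $\mathcal B_\ell(E')=\{B\in\mathcal B(E'):\|\Sigma B\|_{\mathsf H}=\ell\}$. *)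

theory Defs
  imports Complex_Main "HOL-Library.FuncSet"
begin

text \<open>Elements of Z_N^V are represented as functions v => nat with values in {0..<N}
  (residue representatives) that vanish outside V.\<close>
definition ZN_vec :: "nat \<Rightarrow> 'v set \<Rightarrow> ('v \<Rightarrow> nat) set" where
  "ZN_vec N V = {y. (\<forall>v. y v < N) \<and> (\<forall>v. v \<notin> V \<longrightarrow> y v = 0)}"

definition supp_vec :: "('v \<Rightarrow> nat) \<Rightarrow> 'v set" where
  "supp_vec y = {v. y v \<noteq> 0}"

definition hamming :: "'v set \<Rightarrow> ('v \<Rightarrow> nat) \<Rightarrow> nat" where
  "hamming V y = card {v \<in> V. y v \<noteq> 0}"

text \<open>A k-uniform hypergraph: finite vertex set V, edges are ordered k-tuples
  (lists of length k) of distinct vertices of V.\<close>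
definition uniform_hypergraph :: "nat \<Rightarrow> 'v set \<Rightarrow> 'v list set \<Rightarrow> bool" where
  "uniform_hypergraph k V E \<longleftrightarrow> finite V \<and>
     (\<forall>e\<in>E. length e = k \<and> distinct e \<and> set e \<subseteq> V)"

definition incident :: "'v list \<Rightarrow> 'v list \<Rightarrow> bool" where
  "incident e e' \<longleftrightarrow> set e \<inter> set e' \<noteq> {}"

definition almost_acyclic :: "nat \<Rightarrow> 'v list set \<Rightarrow> bool" where
  "almost_acyclic k E \<longleftrightarrow>
     (\<forall>F. F \<subseteq> E \<longrightarrow> finite F \<longrightarrow>
        real (card (\<Union>e\<in>F. set e)) \<ge> real (card F) * (real k - 1.1))"

definition SigmaB :: "nat \<Rightarrow> 'v list set \<Rightarrow> ('v list \<Rightarrow> 'v \<Rightarrow> nat) \<Rightarrow> 'v \<Rightarrow> nat" where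
  "SigmaB N E' B = (\<lambda>v. (\<Sum>e\<in>E'. B e v) mod N)"

definition calB :: "nat \<Rightarrow> 'v set \<Rightarrow> 'v list set \<Rightarrow> ('v list \<Rightarrow> 'v \<Rightarrow> nat) set" where
  "calB N V E' = {B \<in> E' \<rightarrow>\<^sub>E ZN_vec N V.
       \<forall>e\<in>E'. supp_vec (B e) \<subseteq> set e \<and> card (supp_vec (B e)) \<ge> 3}"

definition calB_l :: "nat \<Rightarrow> 'v set \<Rightarrow> 'v list set \<Rightarrow> nat \<Rightarrow> ('v list \<Rightarrow> 'v \<Rightarrow> nat) set" where
  "calB_l N V E' l = {B \<in> calB N V E'. hamming V (SigmaB N E' B) = l}"

end

theory Submission
  imports Defs
begin

text \<open>Let B \<in> B_l(E'). Double counting over the vertices covered by E', where a vertex meeting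
  exactly one nonzero B e lies in the support of the sum, together with almost-acyclicity gives
  4 |E'| \<le> 5 l. Applied to the components of E' (two edges being adjacent when they meet),
  whose sums have disjoint supports, it shows that E' has at most l / 2 components.
  There are at most (N^k)^|E'| maps B; write (N^k)^|E'| = (8 d N^k)^|E'| q^|E'| with
  q = 1 / (8 d) and bound the first factor by (8 d N^k)^(3 l / 2). Encoding connected sets by
  depth-first walks shows that the connected sets containing a fixed edge have total weight at
  most 1 under C \<mapsto> q^|C|; choosing a root in every component, the total weight of the sets E'
  with at most l / 2 components is therefore at most the number of sets of at most l / 2 edges,
  which is at most (2 e m / l)^(l / 2).\<close>

section \<open>Components and connected sets of a symmetric relation\<close>

definition adj_on :: "('a \<Rightarrow> 'a \<Rightarrow> bool) \<Rightarrow> 'a set \<Rightarrow> 'a rel" where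
  "adj_on adj X = {(x, y). x \<in> X \<and> y \<in> X \<and> adj x y}"

definition component :: "('a \<Rightarrow> 'a \<Rightarrow> bool) \<Rightarrow> 'a set \<Rightarrow> 'a \<Rightarrow> 'a set" where
  "component adj X x = {y. (x, y) \<in> (adj_on adj X)\<^sup>*}"

definition connected_set :: "('a \<Rightarrow> 'a \<Rightarrow> bool) \<Rightarrow> 'a set \<Rightarrow> bool" where
  "connected_set adj C \<longleftrightarrow> (\<forall>x\<in>C. \<forall>y\<in>C. (x, y) \<in> (adj_on adj C)\<^sup>*)"

definition roots :: "('a \<Rightarrow> 'a \<Rightarrow> bool) \<Rightarrow> 'a set \<Rightarrow> 'a set" where
  "roots adj X = (\<lambda>x. SOME r. r \<in> component adj X x) ` X"

lemma adj_on_rtrancl_subset: "(x, y) \<in> (adj_on adj X)\<^sup>* \<Longrightarrow> x \<in> X \<Longrightarrow> y \<in> X"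
  by (induction rule: rtrancl_induct) (auto simp: adj_on_def)

lemma self_in_component: "x \<in> component adj X x"
  by (simp add: component_def)

lemma component_subset: "x \<in> X \<Longrightarrow> component adj X x \<subseteq> X"
  using adj_on_rtrancl_subset by (fastforce simp: component_def)

lemma component_closed:
  assumes "y \<in> component adj X x" "z \<in> X" "adj y z" "x \<in> X"
  shows "z \<in> component adj X x"
proof -
  have "y \<in> X" using component_subset[OF assms(4)] assms(1) by blast
  then have "(y, z) \<in> adj_on adj X" using assms by (simp add: adj_on_def)
  then show ?thesis using assms(1) by (auto simp: component_def intro: rtrancl_into_rtrancl)
qed

context
  fixes adj :: "'a \<Rightarrow> 'a \<Rightarrow> bool"
  assumes sym_adj: "symp adj"
begin

lemma sym_adj_on_rtrancl: "sym ((adj_on adj X)\<^sup>*)"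
  using sym_adj by (intro sym_rtrancl) (auto simp: sym_def adj_on_def symp_def)

lemma component_eq: "y \<in> component adj X x \<Longrightarrow> component adj X y = component adj X x"
  using sym_adj_on_rtrancl[of X] unfolding component_def
  by (auto dest: symD intro: rtrancl_trans)

lemma connected_component: "connected_set adj (component adj X x)"
  unfolding connected_set_def
proof (intro ballI)
  have lift: "(x, y) \<in> (adj_on adj (component adj X x))\<^sup>*" if "(x, y) \<in> (adj_on adj X)\<^sup>*" for y
    using that
  proof (induction rule: rtrancl_induct)
    case (step y z)
    then have "(y, z) \<in> adj_on adj (component adj X x)"
      by (auto simp: adj_on_def component_def intro: rtrancl_into_rtrancl)
    with step.IH show ?case by (rule rtrancl_into_rtrancl)
  qed simp
  fix y z assume "y \<in> component adj X x" "z \<in> component adj X x"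
  then have "(x, y) \<in> (adj_on adj (component adj X x))\<^sup>*" "(x, z) \<in> (adj_on adj (component adj X x))\<^sup>*"
    using lift by (auto simp: component_def)
  with sym_adj_on_rtrancl show "(y, z) \<in> (adj_on adj (component adj X x))\<^sup>*"
    by (meson rtrancl_trans symD)
qed

lemma component_SOME_eq: "component adj X (SOME r. r \<in> component adj X x) = component adj X x"
  by (rule component_eq) (rule someI, rule self_in_component)

lemma roots_subset: "roots adj X \<subseteq> X"
  unfolding roots_def
  by (metis (no_types, lifting) component_subset image_subsetI self_in_component someI subsetD)

lemma component_roots_disjoint:
  assumes "r1 \<in> roots adj X" "r2 \<in> roots adj X" "r1 \<noteq> r2"
  shows "component adj X r1 \<inter> component adj X r2 = {}"
proof (rule ccontr)
  assume "component adj X r1 \<inter> component adj X r2 \<noteq> {}"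
  then obtain z where "z \<in> component adj X r1" "z \<in> component adj X r2" by blast
  then have same: "component adj X r1 = component adj X r2"
    using component_eq by metis
  obtain x1 x2 where "r1 = (SOME r. r \<in> component adj X x1)" "r2 = (SOME r. r \<in> component adj X x2)"
    using assms(1,2) by (auto simp: roots_def)
  with same component_SOME_eq have "component adj X x1 = component adj X x2" by metis
  with \<open>r1 = _\<close> \<open>r2 = _\<close> assms(3) show False by simp
qed

lemma Union_component_roots: "(\<Union>r\<in>roots adj X. component adj X r) = X"
proof
  show "(\<Union>r\<in>roots adj X. component adj X r) \<subseteq> X"
    using roots_subset component_subset by (meson UN_least subsetD)
  show "X \<subseteq> (\<Union>r\<in>roots adj X. component adj X r)"
  proof
    fix x assume "x \<in> X"
    then have "(SOME r. r \<in> component adj X x) \<in> roots adj X" by (simp add: roots_def)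
    moreover have "x \<in> component adj X (SOME r. r \<in> component adj X x)"
      by (simp add: component_SOME_eq self_in_component)
    ultimately show "x \<in> (\<Union>r\<in>roots adj X. component adj X r)" by blast
  qed
qed

text \<open>C1 is closed under steps inside C - {r}, so a path from r to a vertex outside C1, cut at
  its last visit to r, avoids C1.\<close>
lemma connected_set_split:
  assumes conn: "connected_set adj C" and "r \<in> C" "u \<in> C" "u \<noteq> r"
  defines "C1 \<equiv> component adj (C - {r}) u"
  shows "connected_set adj C1" "connected_set adj (C - C1)" "u \<in> C1" "C1 \<subseteq> C - {r}"
proof -
  show "connected_set adj C1" "u \<in> C1" "C1 \<subseteq> C - {r}"
    using assms(3,4) connected_component self_in_component component_subset[of u "C - {r}" adj]
    unfolding C1_def by auto
  then have "r \<notin> C1" by blast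
  have reach: "(r, y) \<in> (adj_on adj (C - C1))\<^sup>*" if "(r, y) \<in> (adj_on adj C)\<^sup>*" "y \<notin> C1" for y
    using that
  proof (induction rule: rtrancl_induct)
    case (step y z)
    show ?case
    proof (cases "z = r")
      case False
      with step.hyps(2) have "z \<in> C - {r}" by (auto simp: adj_on_def)
      then have "y \<notin> C1"
        using step component_closed[where X = "C - {r}" and x = u] \<open>u \<in> C1\<close> \<open>C1 \<subseteq> C - {r}\<close>
        by (auto simp: adj_on_def C1_def)
      with step show ?thesis by (auto simp: adj_on_def intro: rtrancl_into_rtrancl)
    qed simp
  qed simp
  show "connected_set adj (C - C1)"
    unfolding connected_set_def
  proof (intro ballI)
    fix a b assume "a \<in> C - C1" "b \<in> C - C1"
    then have "(r, a) \<in> (adj_on adj (C - C1))\<^sup>*" "(r, b) \<in> (adj_on adj (C - C1))\<^sup>*"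
      using reach conn \<open>r \<in> C\<close> by (auto simp: connected_set_def)
    with sym_adj_on_rtrancl show "(a, b) \<in> (adj_on adj (C - C1))\<^sup>*"
      by (meson rtrancl_trans symD)
  qed
qed

end

lemma connected_set_neighbour:
  assumes "connected_set adj C" "r \<in> C" "C \<noteq> {r}"
  obtains u where "u \<in> C" "u \<noteq> r" "adj r u"
proof -
  obtain x where "x \<in> C" "x \<noteq> r" using assms(2,3) by blast
  have "y = r \<or> (\<exists>u\<in>C. u \<noteq> r \<and> adj r u)" if "(r, y) \<in> (adj_on adj C)\<^sup>*" for y
    using that by (induction rule: rtrancl_induct) (auto simp: adj_on_def)
  with assms(1,2) \<open>x \<in> C\<close> \<open>x \<noteq> r\<close> that show ?thesis by (meson connected_set_def)
qed

section \<open>Counting connected sets by depth-first walks\<close>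

lemma degree_bounded_enumeration:
  assumes "finite E" "\<forall>x\<in>E. card {y\<in>E. adj x y} \<le> d"
  obtains nb :: "'a \<Rightarrow> nat \<Rightarrow> 'a" where "\<forall>x\<in>E. \<forall>y\<in>E. adj x y \<longrightarrow> (\<exists>j<d. nb x j = y)"
proof -
  have "\<exists>xs. set xs = {y\<in>E. adj x y} \<and> distinct xs" for x
    using assms(1) by (intro finite_distinct_list) simp
  then obtain xs where xs: "\<And>x. set (xs x) = {y\<in>E. adj x y} \<and> distinct (xs x)" by metis
  show ?thesis
  proof (rule that[of "\<lambda>x j. xs x ! j"], intro ballI impI)
    fix x y assume "x \<in> E" "y \<in> E" "adj x y"
    then obtain j where "j < length (xs x)" "xs x ! j = y" using xs by (metis in_set_conv_nth mem_Collect_eq)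
    moreover have "length (xs x) \<le> d" using xs assms(2) \<open>x \<in> E\<close> by (metis distinct_card)
    ultimately show "\<exists>j<d. xs x ! j = y" by (auto intro!: exI[of _ j])
  qed
qed

text \<open>Replays a depth-first walk on a stack of vertices: Some j moves from the top of the
  stack to its j-th neighbour, None backtracks.\<close>
fun dfs_visit :: "('a \<Rightarrow> nat \<Rightarrow> 'a) \<Rightarrow> 'a list \<Rightarrow> nat option list \<Rightarrow> 'a set" where
  "dfs_visit nb st [] = {}"
| "dfs_visit nb [] (c # w) = {}"
| "dfs_visit nb (x # st) (None # w) = dfs_visit nb st w"
| "dfs_visit nb (x # st) (Some j # w) = insert (nb x j) (dfs_visit nb (nb x j # x # st) w)"

definition dfs_codes :: "nat \<Rightarrow> nat \<Rightarrow> nat \<Rightarrow> nat option list set" where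
  "dfs_codes d L p = {w. length w = L \<and> set w \<subseteq> insert None (Some ` {..<d})
      \<and> length (filter (\<lambda>c. c \<noteq> None) w) = p}"

lemma finite_dfs_codes: "finite (dfs_codes d L p)"
proof (rule finite_subset)
  show "dfs_codes d L p \<subseteq> {w. set w \<subseteq> insert None (Some ` {..<d}) \<and> length w = L}"
    by (auto simp: dfs_codes_def)
qed (rule finite_lists_length_eq, simp)

lemma dfs_codes_0: "dfs_codes d 0 p = (if p = 0 then {[]} else {})"
  by (auto simp: dfs_codes_def)

lemma dfs_codes_Suc_0: "dfs_codes d (Suc L) 0 \<subseteq> Cons None ` dfs_codes d L 0"
proof
  fix w assume "w \<in> dfs_codes d (Suc L) 0"
  then show "w \<in> Cons None ` dfs_codes d L 0"
    by (cases w) (auto simp: dfs_codes_def)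
qed

lemma dfs_codes_Suc_Suc:
  "dfs_codes d (Suc L) (Suc p) \<subseteq>
     Cons None ` dfs_codes d L (Suc p) \<union> (\<lambda>(j, w). Some j # w) ` ({..<d} \<times> dfs_codes d L p)"
proof
  fix w assume w: "w \<in> dfs_codes d (Suc L) (Suc p)"
  then obtain c w' where "w = c # w'" by (cases w) (auto simp: dfs_codes_def)
  with w show "w \<in> Cons None ` dfs_codes d L (Suc p) \<union> (\<lambda>(j, w). Some j # w) ` ({..<d} \<times> dfs_codes d L p)"
    by (cases c) (force simp: dfs_codes_def)+
qed

lemma card_dfs_codes_le: "card (dfs_codes d L p) \<le> 2 ^ L * d ^ p"
proof (induction L arbitrary: p)
  case 0
  show ?case by (simp add: dfs_codes_0)
next
  case (Suc L)
  show ?case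
  proof (cases p)
    case 0
    have "card (dfs_codes d (Suc L) 0) \<le> card (dfs_codes d L 0)"
      using card_mono[OF _ dfs_codes_Suc_0] card_image_le finite_dfs_codes
      by (metis finite_imageI le_trans)
    with Suc.IH[of 0] 0 show ?thesis by simp
  next
    case (Suc p')
    let ?S = "(\<lambda>(j, w). Some j # w) ` ({..<d} \<times> dfs_codes d L p')"
    have "card (dfs_codes d (Suc L) p) \<le> card (Cons None ` dfs_codes d L p \<union> ?S)"
      using dfs_codes_Suc_Suc Suc finite_dfs_codes by (intro card_mono) auto
    also have "\<dots> \<le> card (Cons None ` dfs_codes d L p) + card ?S"
      by (rule card_Un_le)
    also have "\<dots> \<le> card (dfs_codes d L p) + card ({..<d} \<times> dfs_codes d L p')"
      by (intro add_mono card_image_le) (auto simp: finite_dfs_codes)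
    also have "\<dots> = card (dfs_codes d L p) + d * card (dfs_codes d L p')"
      by (simp add: card_cartesian_product)
    also have "\<dots> \<le> 2 ^ L * d ^ p + d * (2 ^ L * d ^ p')"
      using Suc.IH by (intro add_mono mult_le_mono2) auto
    finally show ?thesis using Suc by (simp add: algebra_simps)
  qed
qed

lemma dfs_codes_branch:
  assumes "j < d" "w1 \<in> dfs_codes d (2 * p1) p1" "w2 \<in> dfs_codes d (2 * p2) p2"
  shows "Some j # w1 @ None # w2 \<in> dfs_codes d (2 * Suc (p1 + p2)) (Suc (p1 + p2))"
  using assms by (auto simp: dfs_codes_def)

lemma dfs_visit_branch:
  assumes "\<forall>st w'. dfs_visit nb (u # st) (w1 @ w') = A1 \<union> dfs_visit nb (u # st) w'"
    and "\<forall>st w'. dfs_visit nb (r # st) (w2 @ w') = A2 \<union> dfs_visit nb (r # st) w'"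
    and "nb r j = u"
  shows "dfs_visit nb (r # st) ((Some j # w1 @ None # w2) @ w') = insert u (A1 \<union> A2) \<union> dfs_visit nb (r # st) w'"
  using assms by (simp add: Un_assoc)

definition rooted_connected_sets :: "('a \<Rightarrow> 'a \<Rightarrow> bool) \<Rightarrow> 'a set \<Rightarrow> 'a \<Rightarrow> 'a set set" where
  "rooted_connected_sets adj E r = {C. C \<subseteq> E \<and> r \<in> C \<and> connected_set adj C}"

context
  fixes adj :: "'a \<Rightarrow> 'a \<Rightarrow> bool" and E :: "'a set" and d :: nat and nb :: "'a \<Rightarrow> nat \<Rightarrow> 'a"
  assumes sym_adj: "symp adj"
    and nb: "\<forall>x\<in>E. \<forall>y\<in>E. adj x y \<longrightarrow> (\<exists>j<d. nb x j = y)"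
begin

text \<open>The code steps from r to a neighbour u, explores the component of u in C - {r}
  recursively, backtracks to r and explores the rest of C.\<close>
lemma dfs_code_exists:
  assumes "finite C" "C \<subseteq> E" "connected_set adj C" "r \<in> C"
  shows "\<exists>w\<in>dfs_codes d (2 * (card C - 1)) (card C - 1).
           \<forall>st w'. dfs_visit nb (r # st) (w @ w') = (C - {r}) \<union> dfs_visit nb (r # st) w'"
  using assms
proof (induction "card C" arbitrary: C r rule: less_induct)
  case less
  show ?case
  proof (cases "C = {r}")
    case True
    then show ?thesis by (intro bexI[of _ "[]"]) (auto simp: dfs_codes_def)
  next
    case False
    then obtain u where u: "u \<in> C" "u \<noteq> r" "adj r u"
      using connected_set_neighbour less.prems(3,4) by metis
    define C1 where "C1 = component adj (C - {r}) u"
    note split = connected_set_split[OF sym_adj less.prems(3,4) u(1,2), folded C1_def]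
    have "r \<in> C - C1" using split(4) less.prems(4) by blast
    have "C1 \<subseteq> C" using split(4) by blast
    then have fin: "finite C1" "finite (C - C1)"
      using less.prems(1) by (meson finite_subset, simp)
    have card_split: "card C = card C1 + card (C - C1)"
      using \<open>C1 \<subseteq> C\<close> less.prems(1) by (simp add: card_Diff_subset card_mono fin(1))
    have pos: "card C1 > 0" "card (C - C1) > 0"
      using fin split(3) \<open>r \<in> C - C1\<close> card_gt_0_iff by blast+
    obtain w1 where w1: "w1 \<in> dfs_codes d (2 * (card C1 - 1)) (card C1 - 1)"
      "\<forall>st w'. dfs_visit nb (u # st) (w1 @ w') = (C1 - {u}) \<union> dfs_visit nb (u # st) w'"
      using less.hyps[of C1 u] card_split pos fin split less.prems(2) by auto
    obtain w2 where w2: "w2 \<in> dfs_codes d (2 * (card (C - C1) - 1)) (card (C - C1) - 1)"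
      "\<forall>st w'. dfs_visit nb (r # st) (w2 @ w') = (C - C1 - {r}) \<union> dfs_visit nb (r # st) w'"
      using less.hyps[of "C - C1" r] card_split pos fin split \<open>r \<in> C - C1\<close> less.prems(2) by auto
    obtain j where j: "j < d" "nb r j = u" using nb u less.prems(2,4) by blast
    have "card C - 1 = Suc ((card C1 - 1) + (card (C - C1) - 1))" using card_split pos by simp
    moreover have "insert u ((C1 - {u}) \<union> (C - C1 - {r})) = C - {r}" using split(3,4) by auto
    ultimately show ?thesis
      using dfs_codes_branch[OF j(1) w1(1) w2(1)] dfs_visit_branch[OF w1(2) w2(2) j(2)]
      by (intro bexI[of _ "Some j # w1 @ None # w2"]) simp_all
  qed
qed

lemma card_rooted_connected_sets_le:
  assumes "finite E"
  shows "card {C \<in> rooted_connected_sets adj E r. card C = Suc p} \<le> 4 ^ p * d ^ p"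
proof -
  let ?S = "{C \<in> rooted_connected_sets adj E r. card C = Suc p}"
  have "\<exists>w\<in>dfs_codes d (2 * p) p. C = insert r (dfs_visit nb [r] w)" if "C \<in> ?S" for C
  proof -
    have C: "finite C" "C \<subseteq> E" "connected_set adj C" "r \<in> C" "card C = Suc p"
      using that assms by (auto simp: rooted_connected_sets_def intro: finite_subset)
    then obtain w where w: "w \<in> dfs_codes d (2 * p) p"
      "\<forall>st w'. dfs_visit nb (r # st) (w @ w') = (C - {r}) \<union> dfs_visit nb (r # st) w'"
      using dfs_code_exists[OF C(1-4)] by auto
    from w(2)[rule_format, of "[]" "[]"] have "dfs_visit nb [r] w = C - {r}" by simp
    with w(1) C(4) show ?thesis by auto
  qed
  then have "?S \<subseteq> (\<lambda>w. insert r (dfs_visit nb [r] w)) ` dfs_codes d (2 * p) p" by blast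
  then have "card ?S \<le> card (dfs_codes d (2 * p) p)"
    by (meson card_image_le card_mono finite_dfs_codes finite_imageI le_trans)
  also have "\<dots> \<le> 4 ^ p * d ^ p"
    using card_dfs_codes_le[of d "2 * p" p] by (simp add: power_mult)
  finally show ?thesis .
qed

end

lemma sum_geometric_weights_le:
  assumes "d > 0"
  shows "(\<Sum>p<n. real (4 ^ p * d ^ p) * (1 / (8 * real d)) ^ Suc p) \<le> 1"
proof -
  define q where "q = 1 / (8 * real d)"
  have summand: "real (4 ^ p * d ^ p) * q ^ Suc p = q * (1 / 2) ^ p" for p
  proof -
    have "real (4 ^ p * d ^ p) * q ^ Suc p = q * (4 * real d * q) ^ p"
      by (simp add: power_mult_distrib)
    also have "4 * real d * q = 1 / 2" using assms by (simp add: q_def)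
    finally show ?thesis .
  qed
  have "(\<Sum>p<n. real (4 ^ p * d ^ p) * q ^ Suc p) = (\<Sum>p<n. q * (1 / 2) ^ p)"
    by (simp only: summand)
  also have "\<dots> = q * (2 - 2 * (1 / 2) ^ n)"
    by (simp add: sum_distrib_left[symmetric] sum_gp_strict)
  also have "\<dots> \<le> q * 2"
    by (intro mult_left_mono) (auto simp: q_def)
  also have "\<dots> \<le> 1"
    using assms by (simp add: q_def)
  finally show ?thesis unfolding q_def .
qed

lemma sum_rooted_connected_sets_le:
  assumes "symp adj" "finite E" "d > 0" "\<forall>x\<in>E. card {y\<in>E. adj x y} \<le> d"
  shows "(\<Sum>C\<in>rooted_connected_sets adj E r. (1 / (8 * real d)) ^ card C) \<le> 1"
proof -
  obtain nb where nb: "\<forall>x\<in>E. \<forall>y\<in>E. adj x y \<longrightarrow> (\<exists>j<d. nb x j = y)"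
    using degree_bounded_enumeration assms(2,4) by blast
  define q where "q = 1 / (8 * real d)"
  let ?S = "rooted_connected_sets adj E r"
  have S: "finite C" "0 < card C" "card C \<le> card E" if "C \<in> ?S" for C
    using that assms(2) by (auto simp: rooted_connected_sets_def card_gt_0_iff card_mono
        intro: finite_subset)
  have "finite ?S"
    using assms(2) by (auto simp: rooted_connected_sets_def intro: finite_subset[of _ "Pow E"])
  then have "(\<Sum>C\<in>?S. q ^ card C) = (\<Sum>p<card E. \<Sum>C\<in>{C \<in> ?S. card C - 1 = p}. q ^ card C)"
    using S by (intro sum.group[symmetric]) fastforce+
  also have "\<dots> = (\<Sum>p<card E. real (card {C \<in> ?S. card C = Suc p}) * q ^ Suc p)"
  proof (intro sum.cong refl)
    fix p
    have "{C \<in> ?S. card C - 1 = p} = {C \<in> ?S. card C = Suc p}" using S by fastforce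
    then show "(\<Sum>C\<in>{C \<in> ?S. card C - 1 = p}. q ^ card C) = real (card {C \<in> ?S. card C = Suc p}) * q ^ Suc p"
      by simp
  qed
  also have "\<dots> \<le> (\<Sum>p<card E. real (4 ^ p * d ^ p) * q ^ Suc p)"
    using card_rooted_connected_sets_le[OF assms(1) nb assms(2)] q_def
    by (intro sum_mono mult_right_mono) (simp_all only: of_nat_le_iff, simp)
  also have "\<dots> \<le> 1"
    unfolding q_def using assms(3) by (rule sum_geometric_weights_le)
  finally show ?thesis unfolding q_def .
qed

section \<open>Sets with few components\<close>

lemma card_eq_sum_card_components:
  assumes "symp adj" "finite X"
  shows "card X = (\<Sum>r\<in>roots adj X. card (component adj X r))"
proof -
  have "finite (roots adj X)" using assms(2) by (simp add: roots_def)
  moreover have "\<forall>r\<in>roots adj X. finite (component adj X r)"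
    using assms(2) roots_subset[OF assms(1)] by (metis component_subset finite_subset subsetD)
  ultimately have "card (\<Union>r\<in>roots adj X. component adj X r) = (\<Sum>r\<in>roots adj X. card (component adj X r))"
    using component_roots_disjoint[OF assms(1)] by (intro card_UN_disjoint) auto
  then show ?thesis by (simp add: Union_component_roots[OF assms(1)])
qed

lemma inj_roots_components:
  assumes "symp adj"
  shows "inj (\<lambda>X. (roots adj X, restrict (component adj X) (roots adj X)))"
proof (rule injI)
  fix X Y
  assume "(roots adj X, restrict (component adj X) (roots adj X))
    = (roots adj Y, restrict (component adj Y) (roots adj Y))"
  then have roots: "roots adj X = roots adj Y"
    and comps: "\<And>r. r \<in> roots adj X \<Longrightarrow> component adj X r = component adj Y r"
    by (auto simp: fun_eq_iff restrict_def split: if_splits)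
  have "X = (\<Union>r\<in>roots adj X. component adj X r)" by (simp add: Union_component_roots[OF assms])
  also have "\<dots> = (\<Union>r\<in>roots adj Y. component adj Y r)" using roots comps by simp
  finally show "X = Y" by (simp add: Union_component_roots[OF assms])
qed

lemma component_in_rooted_connected_sets:
  assumes "symp adj" "X \<subseteq> E" "r \<in> roots adj X"
  shows "component adj X r \<in> rooted_connected_sets adj E r"
  using assms roots_subset[OF assms(1)] component_subset[of r X adj] connected_component[OF assms(1)]
    self_in_component
  by (auto simp: rooted_connected_sets_def)

text \<open>Encoding X by its roots and their components turns the sum over G into a sum over root
  sets R of products of sums over rooted connected sets.\<close>
lemma sum_few_components_le:
  fixes adj :: "'a \<Rightarrow> 'a \<Rightarrow> bool" and q s :: real
  assumes sym: "symp adj" and "finite E" "0 \<le> q"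
    and conn: "\<And>r. r \<in> E \<Longrightarrow> (\<Sum>C\<in>rooted_connected_sets adj E r. q ^ card C) \<le> 1"
    and G: "\<And>X. X \<in> G \<Longrightarrow> X \<subseteq> E" "\<And>X. X \<in> G \<Longrightarrow> real (card (roots adj X)) \<le> s"
  shows "(\<Sum>X\<in>G. q ^ card X) \<le> card {R. R \<subseteq> E \<and> real (card R) \<le> s}"
proof -
  define Rs where "Rs = {R. R \<subseteq> E \<and> real (card R) \<le> s}"
  define encode where "encode X = (roots adj X, restrict (component adj X) (roots adj X))" for X
  define F :: "'a set \<times> ('a \<Rightarrow> 'a set) \<Rightarrow> real" where "F = (\<lambda>(R, g). \<Prod>r\<in>R. q ^ card (g r))"
  have fin: "finite Rs" "\<And>r. finite (rooted_connected_sets adj E r)" "\<And>R. R \<in> Rs \<Longrightarrow> finite R"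
    using \<open>finite E\<close> by (auto simp: Rs_def rooted_connected_sets_def intro: finite_subset)
  have weight: "q ^ card X = F (encode X)" if "X \<in> G" for X
  proof -
    have "finite X" using G that \<open>finite E\<close> finite_subset by blast
    then show ?thesis
      by (simp add: card_eq_sum_card_components[OF sym] F_def encode_def power_sum)
  qed
  have inj: "inj_on encode G"
    using inj_roots_components[OF sym] unfolding encode_def by (rule inj_on_subset) simp
  have image: "encode ` G \<subseteq> Sigma Rs (\<lambda>R. PiE R (rooted_connected_sets adj E))"
    using G roots_subset[OF sym] component_in_rooted_connected_sets[OF sym]
    by (fastforce simp: encode_def Rs_def)
  have "(\<Sum>X\<in>G. q ^ card X) = (\<Sum>c\<in>encode ` G. F c)"
    using weight by (simp add: sum.reindex[OF inj])
  also have "\<dots> \<le> (\<Sum>c\<in>Sigma Rs (\<lambda>R. PiE R (rooted_connected_sets adj E)). F c)"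
  proof (rule sum_mono2)
    show "finite (Sigma Rs (\<lambda>R. PiE R (rooted_connected_sets adj E)))"
      using fin by (auto intro!: finite_SigmaI finite_PiE)
    show "0 \<le> F c" for c
      using \<open>0 \<le> q\<close> by (auto simp: F_def intro: prod_nonneg split: prod.splits)
  qed (rule image)
  also have "\<dots> = (\<Sum>R\<in>Rs. \<Prod>r\<in>R. \<Sum>C\<in>rooted_connected_sets adj E r. q ^ card C)"
    using fin by (simp add: sum.Sigma[symmetric] finite_PiE F_def prod_sum_PiE)
  also have "\<dots> \<le> (\<Sum>R\<in>Rs. 1)"
    using conn \<open>0 \<le> q\<close> by (intro sum_mono prod_le_1) (auto simp: Rs_def sum_nonneg)
  finally show ?thesis by (simp add: Rs_def)
qed

text \<open>With t = s / card E, every counted R has t ^ card R * (1 / t) powr s \<ge> 1, and the sum of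
  t ^ card R over all subsets R of E is (1 + t) ^ card E \<le> exp s.\<close>
lemma card_subsets_card_le_powr:
  fixes s :: real
  assumes "finite E" "0 < s" "s \<le> real (card E)"
  shows "real (card {R. R \<subseteq> E \<and> real (card R) \<le> s}) \<le> (exp 1 * real (card E) / s) powr s"
proof -
  define m where "m = real (card E)"
  define t where "t = s / m"
  have "0 < t" "t \<le> 1" "1 \<le> 1 / t" using assms by (simp_all add: t_def m_def)
  let ?S = "{R. R \<subseteq> E \<and> real (card R) \<le> s}"
  have one: "1 \<le> t ^ card R * (1 / t) powr s" if "R \<in> ?S" for R
  proof -
    have "(1 / t) ^ card R \<le> (1 / t) powr s"
      using that \<open>1 \<le> 1 / t\<close> \<open>0 < t\<close> by (simp add: powr_realpow[symmetric] powr_mono del: divide_powr_uminus)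
    then have "t ^ card R * (1 / t) ^ card R \<le> t ^ card R * (1 / t) powr s"
      using \<open>0 < t\<close> by (intro mult_left_mono) auto
    then show ?thesis using \<open>0 < t\<close> by (simp add: power_one_over)
  qed
  have "real (card ?S) = (\<Sum>R\<in>?S. 1)" by simp
  also have "\<dots> \<le> (\<Sum>R\<in>?S. t ^ card R * (1 / t) powr s)"
    using one by (intro sum_mono)
  also have "\<dots> \<le> (\<Sum>R\<in>Pow E. t ^ card R * (1 / t) powr s)"
    using assms(1) \<open>0 < t\<close> by (intro sum_mono2) auto
  also have "\<dots> = (1 + t) ^ card E * (1 / t) powr s"
    using prod_add[OF assms(1), of "\<lambda>_. t" "\<lambda>_. 1"]
    by (simp add: sum_distrib_right[symmetric] add.commute)
  also have "\<dots> \<le> exp t ^ card E * (1 / t) powr s"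
    using \<open>0 < t\<close> by (intro mult_right_mono power_mono) (auto simp: add.commute exp_ge_add_one_self)
  also have "exp t ^ card E = exp 1 powr s"
    using assms(2,3) by (simp add: t_def m_def powr_def exp_of_nat_mult[symmetric])
  also have "exp 1 powr s * (1 / t) powr s = (exp 1 * real (card E) / s) powr s"
    using assms(2,3) by (simp add: t_def m_def powr_mult[symmetric])
  finally show ?thesis .
qed

section \<open>Supports of sums of vectors on hyperedges\<close>

lemma uniform_hypergraph_subset: "uniform_hypergraph k V E \<Longrightarrow> F \<subseteq> E \<Longrightarrow> uniform_hypergraph k V F"
  by (auto simp: uniform_hypergraph_def)

lemma almost_acyclic_subset: "almost_acyclic k E \<Longrightarrow> F \<subseteq> E \<Longrightarrow> almost_acyclic k F"
  by (auto simp: almost_acyclic_def)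

lemma calB_restrict: "B \<in> calB N V X \<Longrightarrow> C \<subseteq> X \<Longrightarrow> restrict B C \<in> calB N V C"
  by (auto simp: calB_def)

lemma SigmaB_restrict: "SigmaB N C (restrict B C) = SigmaB N C B"
  by (simp add: SigmaB_def fun_eq_iff)

lemma calB_D:
  assumes "B \<in> calB N V F" "e \<in> F"
  shows "B e v < N" "B e v \<noteq> 0 \<Longrightarrow> v \<in> set e" "3 \<le> card (supp_vec (B e))"
  using assms by (auto simp: calB_def ZN_vec_def supp_vec_def)

lemma SigmaB_nonzeroE:
  assumes "SigmaB N F B v \<noteq> 0"
  obtains e where "e \<in> F" "B e v \<noteq> 0"
  using assms by (metis SigmaB_def mod_0 sum.neutral)

lemma SigmaB_nonzero_edgeE:
  assumes "B \<in> calB N V X" "F \<subseteq> X" "SigmaB N F B v \<noteq> 0"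
  obtains e where "e \<in> F" "v \<in> set e"
proof -
  obtain e where e: "e \<in> F" "B e v \<noteq> 0" using assms(3) by (rule SigmaB_nonzeroE)
  with assms(2) have "e \<in> X" by blast
  from e(1) calB_D(2)[OF assms(1) this e(2)] show ?thesis by (rule that)
qed

lemma SigmaB_eq_if_vanishing:
  assumes "finite X" "F \<subseteq> X" "\<forall>e\<in>X - F. B e v = 0"
  shows "SigmaB N X B v = SigmaB N F B v"
  using assms by (simp add: SigmaB_def sum.mono_neutral_right)

text \<open>Outside the support of the sum, v cannot meet exactly one nonzero B e: a single value
  below N survives the reduction mod N.\<close>
lemma vertex_count_le:
  assumes "finite F" "B \<in> calB N V F" "v \<in> (\<Union>e\<in>F. set e)"
  shows "2 + card {e \<in> F. B e v \<noteq> 0}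
           \<le> 2 * card {e \<in> F. v \<in> set e} + of_bool (SigmaB N F B v \<noteq> 0)"
proof -
  have le: "card {e \<in> F. B e v \<noteq> 0} \<le> card {e \<in> F. v \<in> set e}"
    using assms(1,2) calB_D(2) by (intro card_mono) auto
  have "0 < card {e \<in> F. v \<in> set e}" using assms(1,3) by (auto simp: card_gt_0_iff)
  moreover have "card {e \<in> F. B e v \<noteq> 0} \<noteq> 1" if "SigmaB N F B v = 0"
  proof
    assume "card {e \<in> F. B e v \<noteq> 0} = 1"
    then obtain e where e: "{e \<in> F. B e v \<noteq> 0} = {e}" by (meson card_1_singletonE)
    then have "e \<in> F" "B e v \<noteq> 0" by blast+
    have "SigmaB N F B v = SigmaB N {e} B v"
      using assms(1) e by (intro SigmaB_eq_if_vanishing) auto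
    also have "\<dots> = B e v" using calB_D(1)[OF assms(2) \<open>e \<in> F\<close>] by (simp add: SigmaB_def)
    finally show False using \<open>B e v \<noteq> 0\<close> that by simp
  qed
  ultimately show ?thesis using le by (cases "SigmaB N F B v = 0") auto
qed

lemma double_count_hamming_SigmaB:
  assumes "uniform_hypergraph k V F" "finite F" "B \<in> calB N V F"
  shows "2 * card (\<Union>e\<in>F. set e) + 3 * card F \<le> 2 * k * card F + hamming V (SigmaB N F B)"
proof -
  define U where "U = (\<Union>e\<in>F. set e)"
  have edge: "length e = k" "distinct e" "set e \<subseteq> V" if "e \<in> F" for e
    using assms(1) that by (auto simp: uniform_hypergraph_def)
  have "finite U" using assms(2) by (simp add: U_def)
  have "v \<in> U" if "SigmaB N F B v \<noteq> 0" for v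
    using SigmaB_nonzero_edgeE[OF assms(3) subset_refl that] by (auto simp: U_def)
  then have "{v \<in> V. SigmaB N F B v \<noteq> 0} = U \<inter> {v. SigmaB N F B v \<noteq> 0}"
    using edge(3) by (auto simp: U_def)
  then have Z: "(\<Sum>v\<in>U. of_bool (SigmaB N F B v \<noteq> 0)) = hamming V (SigmaB N F B)"
    using \<open>finite U\<close> by (simp add: hamming_def)
  have "card {v \<in> U. v \<in> set e} = k" if "e \<in> F" for e
  proof -
    have "{v \<in> U. v \<in> set e} = set e" using that by (auto simp: U_def)
    then show ?thesis using edge(1,2)[OF that] by (simp add: distinct_card)
  qed
  then have "(\<Sum>v\<in>U. card {e \<in> F. v \<in> set e}) = (\<Sum>e\<in>F. k)"
    using \<open>finite U\<close> assms(2) by (intro sum_multicount_gen) auto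
  moreover have "(\<Sum>v\<in>U. card {e \<in> F. B e v \<noteq> 0}) = (\<Sum>e\<in>F. card (supp_vec (B e)))"
    using \<open>finite U\<close> assms(2) calB_D(2)[OF assms(3)]
    by (intro sum_multicount_gen) (auto simp: U_def supp_vec_def intro!: arg_cong[where f = card])
  moreover have "(\<Sum>e\<in>F. 3) \<le> (\<Sum>e\<in>F. card (supp_vec (B e)))"
    using calB_D(3)[OF assms(3)] by (intro sum_mono) auto
  moreover have "(\<Sum>v\<in>U. 2 + card {e \<in> F. B e v \<noteq> 0})
      \<le> (\<Sum>v\<in>U. 2 * card {e \<in> F. v \<in> set e} + of_bool (SigmaB N F B v \<noteq> 0))"
    using vertex_count_le[OF assms(2,3)] by (intro sum_mono) (simp add: U_def)
  ultimately show ?thesis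
    by (simp only: U_def[symmetric] Z sum.distrib sum_distrib_left[symmetric] sum_constant)
      (simp add: algebra_simps)
qed

lemma four_card_le_five_hamming_SigmaB:
  assumes "uniform_hypergraph k V F" "almost_acyclic k F" "finite F" "B \<in> calB N V F"
  shows "4 * card F \<le> 5 * hamming V (SigmaB N F B)"
proof -
  have "real (card F) * (real k - 1.1) \<le> real (card (\<Union>e\<in>F. set e))"
    using assms(2,3) by (simp add: almost_acyclic_def)
  moreover have "real (2 * card (\<Union>e\<in>F. set e) + 3 * card F)
      \<le> real (2 * k * card F + hamming V (SigmaB N F B))"
    using double_count_hamming_SigmaB[OF assms(1,3,4)] by (simp only: of_nat_le_iff)
  ultimately show ?thesis by (simp add: algebra_simps)
qed

lemma two_le_hamming_SigmaB:
  assumes "uniform_hypergraph k V F" "almost_acyclic k F" "finite F" "F \<noteq> {}" "B \<in> calB N V F"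
  shows "2 \<le> hamming V (SigmaB N F B)"
proof (cases "card F = 1")
  case True
  then obtain e where "F = {e}" by (meson card_1_singletonE)
  with assms(1) have "card (\<Union>e\<in>F. set e) = k" by (simp add: uniform_hypergraph_def distinct_card)
  then show ?thesis using double_count_hamming_SigmaB[OF assms(1,3,5)] True by simp
next
  case False
  moreover have "card F \<noteq> 0" using assms(3,4) by simp
  ultimately have "2 \<le> card F" by linarith
  then show ?thesis using four_card_le_five_hamming_SigmaB[OF assms(1,2,3,5)] by simp
qed

definition edge_adj :: "'v list \<Rightarrow> 'v list \<Rightarrow> bool" where
  "edge_adj e e' \<longleftrightarrow> e' \<noteq> e \<and> incident e e'"

lemma symp_edge_adj: "symp edge_adj"
  by (auto simp: symp_def edge_adj_def incident_def)

lemma component_edges_disjoint: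
  assumes "r \<in> X" "e \<in> component edge_adj X r" "e' \<in> X - component edge_adj X r"
  shows "set e \<inter> set e' = {}"
  using component_closed[OF assms(2), of e'] assms by (auto simp: edge_adj_def incident_def)

lemma SigmaB_component:
  assumes "finite X" "r \<in> X" "B \<in> calB N V X" "SigmaB N (component edge_adj X r) B v \<noteq> 0"
  shows "SigmaB N X B v = SigmaB N (component edge_adj X r) B v"
proof -
  note sub = component_subset[OF assms(2), of edge_adj]
  obtain e where "e \<in> component edge_adj X r" "v \<in> set e"
    using SigmaB_nonzero_edgeE[OF assms(3) sub assms(4)] .
  then have "\<forall>e'\<in>X - component edge_adj X r. B e' v = 0"
    using component_edges_disjoint[OF assms(2)] calB_D(2)[OF assms(3)] by blast
  then show ?thesis using assms(1) sub by (intro SigmaB_eq_if_vanishing)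
qed

lemma SigmaB_components_disjoint:
  assumes "B \<in> calB N V X" "r1 \<in> roots edge_adj X" "r2 \<in> roots edge_adj X" "r1 \<noteq> r2"
    and "SigmaB N (component edge_adj X r1) B v \<noteq> 0"
  shows "SigmaB N (component edge_adj X r2) B v = 0"
proof (rule ccontr)
  assume nonzero: "SigmaB N (component edge_adj X r2) B v \<noteq> 0"
  have "r1 \<in> X" "r2 \<in> X" using assms(2,3) roots_subset[OF symp_edge_adj] by blast+
  note sub = component_subset[OF this(1), of edge_adj] component_subset[OF this(2), of edge_adj]
  obtain e1 e2 where "e1 \<in> component edge_adj X r1" "v \<in> set e1"
    and "e2 \<in> component edge_adj X r2" "v \<in> set e2"
    using SigmaB_nonzero_edgeE[OF assms(1) sub(1) assms(5)] SigmaB_nonzero_edgeE[OF assms(1) sub(2) nonzero]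
    by metis
  moreover have "e2 \<in> X - component edge_adj X r1"
    using component_roots_disjoint[OF symp_edge_adj assms(2-4)] sub(2) \<open>e2 \<in> _\<close> by blast
  ultimately show False using component_edges_disjoint[OF \<open>r1 \<in> X\<close>] by blast
qed

lemma card_roots_le_hamming:
  assumes "uniform_hypergraph k V X" "almost_acyclic k X" "finite X" "B \<in> calB N V X"
  shows "2 * card (roots edge_adj X) \<le> hamming V (SigmaB N X B)"
proof -
  let ?R = "roots edge_adj X" and ?C = "component edge_adj X"
  define Z where "Z F = {v \<in> V. SigmaB N F B v \<noteq> 0}" for F
  have R: "r \<in> X" "?C r \<subseteq> X" if "r \<in> ?R" for r
  proof -
    show "r \<in> X" using that roots_subset[OF symp_edge_adj] by blast
    then show "?C r \<subseteq> X" by (rule component_subset)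
  qed
  have two: "2 \<le> card (Z (?C r))" if r: "r \<in> ?R" for r
  proof -
    note sub = R(2)[OF r]
    have "?C r \<noteq> {}" by (metis empty_iff self_in_component)
    from two_le_hamming_SigmaB[OF uniform_hypergraph_subset[OF assms(1) sub]
        almost_acyclic_subset[OF assms(2) sub] finite_subset[OF sub assms(3)] this
        calB_restrict[OF assms(4) sub]]
    show ?thesis by (simp add: SigmaB_restrict hamming_def Z_def)
  qed
  have sub: "Z (?C r) \<subseteq> Z X" if "r \<in> ?R" for r
    using SigmaB_component[OF assms(3) R(1)[OF that] assms(4)] by (auto simp: Z_def)
  have disjoint: "Z (?C r1) \<inter> Z (?C r2) = {}" if "r1 \<in> ?R" "r2 \<in> ?R" "r1 \<noteq> r2" for r1 r2
    using SigmaB_components_disjoint[OF assms(4) that] by (auto simp: Z_def)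
  have fin: "finite ?R" "finite (Z F)" for F
    using assms(1,3) by (auto simp: roots_def Z_def uniform_hypergraph_def)
  have "2 * card ?R = (\<Sum>r\<in>?R. 2)" by simp
  also have "\<dots> \<le> (\<Sum>r\<in>?R. card (Z (?C r)))" using two by (rule sum_mono)
  also have "\<dots> = card (\<Union>r\<in>?R. Z (?C r))" using fin disjoint by (intro card_UN_disjoint[symmetric]) auto
  also have "\<dots> \<le> card (Z X)" using fin sub by (intro card_mono) auto
  finally show ?thesis by (simp add: hamming_def Z_def)
qed

lemma calB_l_nonempty_bounds:
  assumes "uniform_hypergraph k V E" "almost_acyclic k E" "finite E"
    and "X \<in> {X \<in> Pow E. calB_l N V X l \<noteq> {}}"
  shows "real (card X) \<le> 3 * (real l / 2)" and "real (card (roots edge_adj X)) \<le> real l / 2"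
proof -
  from assms(4) obtain B where X: "X \<subseteq> E" and B: "B \<in> calB_l N V X l" by auto
  then have "B \<in> calB N V X" and ham: "hamming V (SigmaB N X B) = l" by (simp_all add: calB_l_def)
  note hyps = uniform_hypergraph_subset[OF assms(1) X] almost_acyclic_subset[OF assms(2) X]
    finite_subset[OF X assms(3)] this(1)
  have "real (4 * card X) \<le> real (5 * l)" "real (2 * card (roots edge_adj X)) \<le> real l"
    using four_card_le_five_hamming_SigmaB[OF hyps] card_roots_le_hamming[OF hyps] ham
    by (simp_all only: of_nat_le_iff)
  then show "real (card X) \<le> 3 * (real l / 2)" "real (card (roots edge_adj X)) \<le> real l / 2"
    by auto
qed

section \<open>Counting the maps B\<close>

lemma card_supported_vectors_le:
  assumes "finite A"
  shows "finite {y :: 'v \<Rightarrow> nat. (\<forall>v. y v < N) \<and> supp_vec y \<subseteq> A}"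
    and "card {y :: 'v \<Rightarrow> nat. (\<forall>v. y v < N) \<and> supp_vec y \<subseteq> A} \<le> N ^ card A"
proof -
  let ?Y = "{y :: 'v \<Rightarrow> nat. (\<forall>v. y v < N) \<and> supp_vec y \<subseteq> A}"
  let ?extend = "\<lambda>f v. if v \<in> A then f v else 0"
  have sub: "?Y \<subseteq> ?extend ` (A \<rightarrow>\<^sub>E {..<N})"
  proof
    fix y assume "y \<in> ?Y"
    then have "y = ?extend (restrict y A)" "restrict y A \<in> A \<rightarrow>\<^sub>E {..<N}"
      by (auto simp: supp_vec_def fun_eq_iff)
    then show "y \<in> ?extend ` (A \<rightarrow>\<^sub>E {..<N})" by blast
  qed
  have fin: "finite (A \<rightarrow>\<^sub>E {..<N})" using assms by (simp add: finite_PiE)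
  with sub show "finite ?Y" by (meson finite_imageI finite_subset)
  have "card ?Y \<le> card (?extend ` (A \<rightarrow>\<^sub>E {..<N}))" using sub fin by (intro card_mono) auto
  also have "\<dots> \<le> card (A \<rightarrow>\<^sub>E {..<N})" using fin by (rule card_image_le)
  also have "\<dots> = N ^ card A" using assms by (simp add: card_PiE)
  finally show "card ?Y \<le> N ^ card A" .
qed

lemma card_calB_le:
  assumes "uniform_hypergraph k V X" "finite X"
  shows "finite (calB N V X)" and "card (calB N V X) \<le> (N ^ k) ^ card X"
proof -
  let ?Y = "\<lambda>e. {y :: 'v \<Rightarrow> nat. (\<forall>v. y v < N) \<and> supp_vec y \<subseteq> set e}"
  have sub: "calB N V X \<subseteq> PiE X ?Y" by (auto simp: calB_def ZN_vec_def)
  have card_set: "card (set e) = k" if "e \<in> X" for e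
    using assms(1) that by (simp add: uniform_hypergraph_def distinct_card)
  have fin: "finite (PiE X ?Y)"
    using assms(2) card_supported_vectors_le(1) by (auto intro!: finite_PiE)
  show "finite (calB N V X)" using sub fin by (rule finite_subset)
  have "card (calB N V X) \<le> card (PiE X ?Y)" using fin sub by (rule card_mono)
  also have "\<dots> = (\<Prod>e\<in>X. card (?Y e))" using assms(2) by (rule card_PiE)
  also have "\<dots> \<le> (\<Prod>e\<in>X. N ^ k)"
    using card_supported_vectors_le(2) card_set by (intro prod_mono) auto
  finally show "card (calB N V X) \<le> (N ^ k) ^ card X" by simp
qed

lemma sum_power_card_le_powr:
  fixes y q a :: real
  assumes "1 \<le> y" "0 \<le> q" "\<And>X. X \<in> G \<Longrightarrow> real (card X) \<le> a"
  shows "(\<Sum>X\<in>G. (y * q) ^ card X) \<le> y powr a * (\<Sum>X\<in>G. q ^ card X)"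
proof -
  have "(y * q) ^ card X \<le> y powr a * q ^ card X" if "X \<in> G" for X
  proof -
    have "y ^ card X = y powr real (card X)" using assms(1) by (simp add: powr_realpow)
    also have "\<dots> \<le> y powr a" using assms(1,3) that by (intro powr_mono) auto
    finally show ?thesis using assms(2) by (simp add: power_mult_distrib mult_right_mono)
  qed
  then show ?thesis by (simp add: sum_distrib_left sum_mono)
qed

lemma powr_constant_le:
  fixes D a x :: real
  assumes "1 \<le> D" "0 \<le> a" "0 \<le> x"
  shows "(8 * D) powr (3 * a) * (2 * exp 1 * x) powr a \<le> ((15 * D) ^ 4 * x) powr a"
proof -
  have "(8 * D) powr (3 * a) = ((8 * D) ^ 3) powr a"
    using assms(1) by (simp add: powr_powr[symmetric])
  then have "(8 * D) powr (3 * a) * (2 * exp 1 * x) powr a = ((8 * D) ^ 3 * (2 * exp 1 * x)) powr a"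
    by (simp only: powr_mult[of "(8 * D) ^ 3"])
  also have "\<dots> \<le> ((15 * D) ^ 4 * x) powr a"
  proof (intro powr_mono2 assms(2))
    have "(8 * D) ^ 3 * (2 * exp 1) \<le> 512 * D ^ 3 * 6" using exp_le assms(1) by simp
    also have "\<dots> \<le> 50625 * D ^ 4"
      using assms(1) power_increasing[of 3 4 D] zero_le_power[of D 3] by linarith
    finally have "(8 * D) ^ 3 * (2 * exp 1) \<le> (15 * D) ^ 4" by (simp add: power_mult_distrib)
    from mult_right_mono[OF this assms(3)]
    show "(8 * D) ^ 3 * (2 * exp 1 * x) \<le> (15 * D) ^ 4 * x" by (simp add: mult.assoc)
  qed (use assms in auto)
  finally show ?thesis .
qed

lemma sum_card_calB_l_le:
  assumes "uniform_hypergraph k V E" "finite E"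
  shows "(\<Sum>E'\<in>Pow E. card (calB_l N V E' l)) \<le> (\<Sum>X\<in>{X \<in> Pow E. calB_l N V X l \<noteq> {}}. (N ^ k) ^ card X)"
proof -
  have "(\<Sum>E'\<in>Pow E. card (calB_l N V E' l)) = (\<Sum>X\<in>{X \<in> Pow E. calB_l N V X l \<noteq> {}}. card (calB_l N V X l))"
    using assms(2) by (intro sum.mono_neutral_right) auto
  also have "\<dots> \<le> (\<Sum>X\<in>{X \<in> Pow E. calB_l N V X l \<noteq> {}}. (N ^ k) ^ card X)"
  proof (intro sum_mono)
    fix X assume "X \<in> {X \<in> Pow E. calB_l N V X l \<noteq> {}}"
    then have "uniform_hypergraph k V X" "finite X"
      using uniform_hypergraph_subset[OF assms(1)] finite_subset[OF _ assms(2)] by auto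
    then show "card (calB_l N V X l) \<le> (N ^ k) ^ card X"
      using card_calB_le card_mono[of "calB N V X" "calB_l N V X l"]
      by (metis (no_types, lifting) calB_l_def mem_Collect_eq order_trans subsetI)
  qed
  finally show ?thesis .
qed

theorem lemma7p11:
  fixes N k d l m :: nat and V :: "'v set" and E :: "'v list set"
  assumes "N \<ge> 2"
    and "d > 0" and "l > 0" and "m > 0" and "m \<ge> l"
    and "uniform_hypergraph k V E"
    and "almost_acyclic k E"
    and "finite E" and "card E = m"
    and "\<forall>e\<in>E. card {e'\<in>E. e' \<noteq> e \<and> incident e e'} \<le> d"
  shows "real (\<Sum>E'\<in>Pow E. card (calB_l N V E' l))
           \<le> ((15 * real d * real N ^ k) ^ 4 * real m / real l) powr (real l / 2)"
proof -
  let ?G = "{X \<in> Pow E. calB_l N V X l \<noteq> {}}"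
  define D where "D = real d * real N ^ k"
  define q where "q = 1 / (8 * real d)"
  have "1 \<le> D"
    using assms(1,2) mult_mono[of 1 "real d" 1 "real N ^ k"] one_le_power[of "real N" k]
    by (simp add: D_def)
  have "8 * D * q = real N ^ k" using assms(2) by (simp add: D_def q_def)
  have deg: "\<forall>x\<in>E. card {y \<in> E. edge_adj x y} \<le> d" using assms(10) by (simp add: edge_adj_def)
  note bounds = calB_l_nonempty_bounds[OF assms(6-8), where N = N and l = l]
  have "real (\<Sum>E'\<in>Pow E. card (calB_l N V E' l)) \<le> (\<Sum>X\<in>?G. (8 * D * q) ^ card X)"
    unfolding \<open>8 * D * q = real N ^ k\<close> using sum_card_calB_l_le[OF assms(6,8), of N l]
    by (simp only: of_nat_sum[symmetric] of_nat_power[symmetric] of_nat_le_iff)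
  also have "\<dots> \<le> (8 * D) powr (3 * (real l / 2)) * (\<Sum>X\<in>?G. q ^ card X)"
    using \<open>1 \<le> D\<close> bounds(1) by (intro sum_power_card_le_powr) (auto simp: q_def)
  also have "\<dots> \<le> (8 * D) powr (3 * (real l / 2)) * card {R. R \<subseteq> E \<and> real (card R) \<le> real l / 2}"
    using sum_few_components_le[where G = ?G, OF symp_edge_adj assms(8) _
        sum_rooted_connected_sets_le[OF symp_edge_adj assms(8,2) deg] _ bounds(2)]
    by (intro mult_left_mono) (auto simp: q_def)
  also have "\<dots> \<le> (8 * D) powr (3 * (real l / 2)) * (2 * exp 1 * (real m / real l)) powr (real l / 2)"
    using card_subsets_card_le_powr[OF assms(8), of "real l / 2"] assms(3,5,9)
    by (intro mult_left_mono) (auto simp: field_simps)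
  also have "\<dots> \<le> ((15 * D) ^ 4 * (real m / real l)) powr (real l / 2)"
    using \<open>1 \<le> D\<close> by (intro powr_constant_le) auto
  finally show ?thesis by (simp add: D_def power_mult_distrib mult.assoc)
qed


end
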